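(* For integers $r\le s<0$, the universal algebraic prolongation of $\mathbb K\delta_{rs}$ in $\mathfrak{gl}(V_{rs})$ is isomorphic to $\mathfrak{gl}_2$; its largest ideal contained in the nonnegative-degree part is $\mathbb K\,\mathrm{Id}$.
   Context: $V_{rs}=\bigoplus_{i=r}^sE_i$ with $\dim E_i=1$ in degree $i$; $\delta_{rs}$ maps $E_i$ onto $E_{i-1}$ for $r<i\le s$ and $E_r$ to $0$. $\mathfrak{gl}(V_{rs})$ is graded by $\mathfrak{gl}(V)_k=\bigoplus_i\operatorname{Hom}(E_i,E_{i+k})$. Universal algebraic prolongation of a line $\mathfrak m\subset\mathfrak g_{-1}$: $\mathfrak u_{-1}=\mathfrak m$, $\mathfrak u_k=\{X\in\mathfrak g_k:[X,\delta]\in\mathfrak u_{k-1}\ \forall\delta\in\mathfrak m\}$ ($k\ge0$), $\mathfrak u(\mathfrak m)=\bigoplus_{k\ge-1}\mathfrak u_k$. *)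

theory Defs
  imports "HOL-Analysis.Analysis"
begin

text \<open>
  Conventions. \<open>V_rs\<close> has the basis \<open>e_r, ..., e_s\<close> with \<open>e_i\<close> spanning \<open>E_i\<close> (degree \<open>i\<close>),
  the basis being chosen so that \<open>\<delta>_rs e_i = e_(i-1)\<close> for \<open>r < i \<le> s\<close> and \<open>\<delta>_rs e_r = 0\<close>.
  An endomorphism of \<open>V_rs\<close> is represented by its matrix \<open>A :: int \<Rightarrow> int \<Rightarrow> 'a\<close>,
  where \<open>A i j\<close> is the coefficient of \<open>e_i\<close> in \<open>A e_j\<close>; entries outside \<open>[r,s]\<^sup>2\<close> vanish.
\<close>

type_synonym 'a endo = "int \<Rightarrow> int \<Rightarrow> 'a"

definition gl :: "int \<Rightarrow> int \<Rightarrow> 'a::field endo set" where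
  "gl r s = {A. \<forall>i j. A i j \<noteq> 0 \<longrightarrow> r \<le> i \<and> i \<le> s \<and> r \<le> j \<and> j \<le> s}"

definition madd :: "'a::field endo \<Rightarrow> 'a endo \<Rightarrow> 'a endo" where
  "madd A B = (\<lambda>i j. A i j + B i j)"

definition msmult :: "'a::field \<Rightarrow> 'a endo \<Rightarrow> 'a endo" where
  "msmult c A = (\<lambda>i j. c * A i j)"

definition mzero :: "'a::field endo" where
  "mzero = (\<lambda>i j. 0)"

definition mmul :: "int \<Rightarrow> int \<Rightarrow> 'a::field endo \<Rightarrow> 'a endo \<Rightarrow> 'a endo" where
  "mmul r s A B = (\<lambda>i j. \<Sum>k\<in>{r..s}. A i k * B k j)"

definition bracket :: "int \<Rightarrow> int \<Rightarrow> 'a::field endo \<Rightarrow> 'a endo \<Rightarrow> 'a endo" where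
  "bracket r s A B = (\<lambda>i j. mmul r s A B i j - mmul r s B A i j)"

definition idV :: "int \<Rightarrow> int \<Rightarrow> 'a::field endo" where
  "idV r s = (\<lambda>i j. if i = j \<and> r \<le> i \<and> i \<le> s then 1 else 0)"

definition delta :: "int \<Rightarrow> int \<Rightarrow> 'a::field endo" where
  "delta r s = (\<lambda>i j. if r < j \<and> j \<le> s \<and> i = j - 1 then 1 else 0)"

definition gl_deg :: "int \<Rightarrow> int \<Rightarrow> int \<Rightarrow> 'a::field endo set" where
  "gl_deg r s k = {A \<in> gl r s. \<forall>i j. A i j \<noteq> 0 \<longrightarrow> i - j = k}"

definition deg_part :: "int \<Rightarrow> 'a::field endo \<Rightarrow> 'a endo" where
  "deg_part k A = (\<lambda>i j. if i - j = k then A i j else 0)"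

definition line :: "'a::field endo \<Rightarrow> 'a endo set" where
  "line d = {msmult c d | c. True}"

text \<open>Universal algebraic prolongation of \<open>\<mathfrak>m \<subseteq> gl(V)_(-1)\<close>:
  \<open>prol_step r s m n = \<mathfrak>u_(n-1)\<close>.\<close>
fun prol_step :: "int \<Rightarrow> int \<Rightarrow> 'a::field endo set \<Rightarrow> nat \<Rightarrow> 'a endo set" where
  "prol_step r s m 0 = m"
| "prol_step r s m (Suc n) =
     {X \<in> gl_deg r s (int n). \<forall>d\<in>m. bracket r s X d \<in> prol_step r s m n}"

definition prol_deg :: "int \<Rightarrow> int \<Rightarrow> 'a::field endo set \<Rightarrow> int \<Rightarrow> 'a endo set" where
  "prol_deg r s m k = (if k < -1 then {mzero} else prol_step r s m (nat (k + 1)))"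

definition prolongation :: "int \<Rightarrow> int \<Rightarrow> 'a::field endo set \<Rightarrow> 'a endo set" where
  "prolongation r s m = {A \<in> gl r s. \<forall>k. deg_part k A \<in> prol_deg r s m k}"

definition prolongation_nonneg :: "int \<Rightarrow> int \<Rightarrow> 'a::field endo set \<Rightarrow> 'a endo set" where
  "prolongation_nonneg r s m = {A \<in> prolongation r s m. deg_part (-1) A = mzero}"

definition is_subspace :: "'a::field endo set \<Rightarrow> bool" where
  "is_subspace S \<longleftrightarrow> mzero \<in> S \<and> (\<forall>A\<in>S. \<forall>B\<in>S. madd A B \<in> S) \<and> (\<forall>c. \<forall>A\<in>S. msmult c A \<in> S)"

definition is_lie_ideal :: "int \<Rightarrow> int \<Rightarrow> 'a::field endo set \<Rightarrow> 'a endo set \<Rightarrow> bool" where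
  "is_lie_ideal r s L I \<longleftrightarrow> is_subspace I \<and> I \<subseteq> L \<and> (\<forall>A\<in>L. \<forall>X\<in>I. bracket r s A X \<in> I)"

definition bracket2 :: "'a::field^2^2 \<Rightarrow> 'a^2^2 \<Rightarrow> 'a^2^2" where
  "bracket2 A B = A ** B - B ** A"

definition lie_iso_gl2 :: "int \<Rightarrow> int \<Rightarrow> 'a::field endo set \<Rightarrow> ('a endo \<Rightarrow> 'a^2^2) \<Rightarrow> bool" where
  "lie_iso_gl2 r s L \<phi> \<longleftrightarrow>
     bij_betw \<phi> L UNIV \<and>
     (\<forall>A\<in>L. \<forall>B\<in>L. \<phi> (madd A B) = \<phi> A + \<phi> B) \<and>
     (\<forall>c. \<forall>A\<in>L. \<phi> (msmult c A) = (\<chi> i j. c * \<phi> A $ i $ j)) \<and>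
     (\<forall>A\<in>L. \<forall>B\<in>L. \<phi> (bracket r s A B) = bracket2 (\<phi> A) (\<phi> B))"

end

theory Submission
  imports Defs
begin

(* Write H = diag(2i - r - s) and E for the degree-1 matrix with entries
   (j - r + 1)(s - j) at position (j+1, j).  Then (E, H, delta) is an sl_2-triple:
   [H,E] = 2E, [H,delta] = -2 delta, [E,delta] = H.  The prolongation u(K delta) is
   computed degree by degree from the action of ad delta on a homogeneous X of degree k:
   on the "band" z(j) = X(j+k, j) it acts as the difference operator z(i-1) - z(i).
   Hence (i) ad delta is injective in degrees k >= 1 and has kernel K Id in degree 0,
   and (ii) in degrees k >= 1 the band of [X,delta] sums to zero (telescoping).
   This gives u_0 = span(Id, H), u_1 = K E and u_k = 0 for k >= 2, so
   u(K delta) = span(Id, H, E, delta), which is gl_2 via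
   Id, H, E, delta |-> 1, diag(1,-1), e_12, e_21.  Finally Id is central, and bracketing
   twice with delta pushes any element of a nonnegative ideal down to degree -1, which
   forces it into K Id. *)

definition diag :: "int \<Rightarrow> int \<Rightarrow> (int \<Rightarrow> 'a::field) \<Rightarrow> 'a endo" where
  "diag r s d = (\<lambda>i j. if i = j \<and> r \<le> i \<and> i \<le> s then d i else 0)"

definition hmat :: "int \<Rightarrow> int \<Rightarrow> 'a::field endo" where
  "hmat r s = diag r s (\<lambda>i. of_int (2*i - r - s))"

definition emat :: "int \<Rightarrow> int \<Rightarrow> 'a::field endo" where
  "emat r s = (\<lambda>i j. if i = j + 1 \<and> r \<le> j \<and> j < s then of_int ((j - r + 1) * (s - j)) else 0)"

lemma idV_diag: "idV r s = diag r s (\<lambda>_. 1)"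
  by (auto simp: idV_def diag_def fun_eq_iff)

lemma mmul_left_single:
  assumes "\<And>k. A i k = (if k = a then w else 0)"
  shows "mmul r s A B i j = (if r \<le> a \<and> a \<le> s then w * B a j else 0)"
proof -
  have "mmul r s A B i j = (\<Sum>k\<in>{r..s}. if k = a then w * B a j else 0)"
    unfolding mmul_def assms by (rule sum.cong) auto
  then show ?thesis by (simp add: sum.delta')
qed

lemma mmul_right_single:
  assumes "\<And>k. B k j = (if k = a then w else 0)"
  shows "mmul r s A B i j = (if r \<le> a \<and> a \<le> s then A i a * w else 0)"
proof -
  have "mmul r s A B i j = (\<Sum>k\<in>{r..s}. if k = a then A i a * w else 0)"
    unfolding mmul_def assms by (rule sum.cong) auto
  then show ?thesis by (simp add: sum.delta')
qed

lemma mmul_diag_left: "mmul r s (diag r s d) A i j = (if r \<le> i \<and> i \<le> s then d i * A i j else 0)"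
  by (subst mmul_left_single[where a=i and w="if r \<le> i \<and> i \<le> s then d i else 0"]) (auto simp: diag_def)

lemma mmul_diag_right: "mmul r s A (diag r s d) i j = (if r \<le> j \<and> j \<le> s then A i j * d j else 0)"
  by (subst mmul_right_single[where a=j and w="if r \<le> j \<and> j \<le> s then d j else 0"]) (auto simp: diag_def)

lemma mmul_delta_right: "mmul r s A (delta r s) i j = (if r < j \<and> j \<le> s then A i (j-1) else 0)"
  by (subst mmul_right_single[where a="j-1" and w="if r < j \<and> j \<le> s then 1 else 0"]) (auto simp: delta_def)

lemma mmul_delta_left: "mmul r s (delta r s) A i j = (if r < i+1 \<and> i+1 \<le> s then A (i+1) j else 0)"
  by (subst mmul_left_single[where a="i+1" and w="if r < i+1 \<and> i+1 \<le> s then 1 else 0"]) (auto simp: delta_def)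

lemma bracket_delta: "bracket r s X (delta r s) i j =
    (if r < j \<and> j \<le> s then X i (j-1) else 0) - (if r < i+1 \<and> i+1 \<le> s then X (i+1) j else 0)"
  by (simp add: bracket_def mmul_delta_left mmul_delta_right)

lemma bracket_madd_left: "bracket r s (madd A B) C = madd (bracket r s A C) (bracket r s B C)"
  by (simp add: bracket_def mmul_def madd_def fun_eq_iff distrib_left distrib_right sum.distrib)
lemma bracket_madd_right: "bracket r s C (madd A B) = madd (bracket r s C A) (bracket r s C B)"
  by (simp add: bracket_def mmul_def madd_def fun_eq_iff distrib_left distrib_right sum.distrib)
lemma bracket_smult_left: "bracket r s (msmult c A) C = msmult c (bracket r s A C)"
  by (simp add: bracket_def mmul_def msmult_def fun_eq_iff sum_distrib_left algebra_simps)
lemma bracket_smult_right: "bracket r s C (msmult c A) = msmult c (bracket r s C A)"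
  by (simp add: bracket_def mmul_def msmult_def fun_eq_iff sum_distrib_left algebra_simps)
lemma bracket_antisym: "bracket r s A B = msmult (-1) (bracket r s B A)"
  by (simp add: bracket_def fun_eq_iff msmult_def)
lemma bracket_self: "bracket r s A A = mzero"
  by (simp add: bracket_def fun_eq_iff mzero_def)

lemma msmult_zero: "msmult 0 A = mzero"
  by (simp add: msmult_def mzero_def fun_eq_iff)

lemma bracket_mzero_left: "bracket r s mzero A = mzero"
  by (simp add: bracket_def mmul_def mzero_def fun_eq_iff)

lemma mzero_deg: "mzero \<in> gl_deg r s k"
  by (simp add: gl_deg_def gl_def mzero_def)

lemma gl_zero: "A \<in> gl r s \<Longrightarrow> \<not> (r \<le> i \<and> i \<le> s \<and> r \<le> j \<and> j \<le> s) \<Longrightarrow> A i j = 0"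
  unfolding gl_def by blast

lemma gl_deg_nz: "X \<in> gl_deg r s k \<Longrightarrow> X i j \<noteq> 0 \<Longrightarrow> i = j + k \<and> r \<le> j \<and> j \<le> s \<and> r \<le> i \<and> i \<le> s"
  unfolding gl_deg_def gl_def by force

lemma gl_deg_gl: "A \<in> gl_deg r s k \<Longrightarrow> A \<in> gl r s"
  by (simp add: gl_deg_def)

lemma gl_deg_madd: "A \<in> gl_deg r s k \<Longrightarrow> B \<in> gl_deg r s k \<Longrightarrow> madd A B \<in> gl_deg r s k"
  unfolding gl_deg_def gl_def madd_def by (simp, metis add.left_neutral)

lemma gl_deg_msmult: "A \<in> gl_deg r s k \<Longrightarrow> msmult c A \<in> gl_deg r s k"
  unfolding gl_deg_def gl_def msmult_def by auto

lemma idV_deg: "idV r s \<in> gl_deg r s 0" by (simp add: gl_deg_def gl_def idV_def)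
lemma hmat_deg: "hmat r s \<in> gl_deg r s 0" by (simp add: gl_deg_def gl_def hmat_def diag_def)
lemma emat_deg: "emat r s \<in> gl_deg r s 1" by (simp add: gl_deg_def gl_def emat_def)
lemma delta_deg: "delta r s \<in> gl_deg r s (-1)" by (simp add: gl_deg_def gl_def delta_def)

lemma bracket_id_left: "A \<in> gl r s \<Longrightarrow> bracket r s (idV r s) A = mzero"
  unfolding idV_diag by (auto simp: bracket_def fun_eq_iff mzero_def mmul_diag_left mmul_diag_right gl_def)

lemma bracket_id_right: "A \<in> gl r s \<Longrightarrow> bracket r s A (idV r s) = mzero"
  by (subst bracket_antisym) (simp add: bracket_id_left msmult_def mzero_def)

lemma bracket_hmat_delta: "bracket r s (hmat r s) (delta r s) = msmult (-2) (delta r s)"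
  by (rule ext, rule ext, subst bracket_delta) (auto simp: msmult_def hmat_def diag_def delta_def)

lemma bracket_hmat_emat: "bracket r s (hmat r s) (emat r s) = msmult 2 (emat r s)"
  by (auto simp: bracket_def hmat_def mmul_diag_left mmul_diag_right fun_eq_iff msmult_def emat_def
      algebra_simps)

lemma bracket_emat_delta:
  assumes "r < s"
  shows "bracket r s (emat r s) (delta r s) = (hmat r s :: 'a::field endo)"
proof (rule ext, rule ext)
  fix i j
  show "bracket r s (emat r s) (delta r s) i j = (hmat r s :: 'a endo) i j"
  proof (cases "i = j \<and> r \<le> j \<and> j \<le> s")
    case True
    then have ij: "i = j" "r \<le> j" "j \<le> s" by auto
    consider "j = r" | "j = s" | "r < j" "j < s" using ij by linarith
    then show ?thesis
    proof cases
      case 3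
      have "(j - 1 - r + 1) * (s - (j - 1)) - (j - r + 1) * (s - j) = 2 * j - r - s"
        by (simp add: algebra_simps)
      then have "(of_int ((j - 1 - r + 1) * (s - (j - 1))) :: 'a) - of_int ((j - r + 1) * (s - j))
          = of_int (2 * j - r - s)"
        by (simp only: of_int_diff[symmetric])
      then show ?thesis using ij 3 by (simp add: bracket_delta emat_def hmat_def diag_def)
    qed (use ij assms in \<open>simp_all add: bracket_delta emat_def hmat_def diag_def algebra_simps\<close>)
  qed (auto simp: bracket_delta emat_def hmat_def diag_def)
qed

definition cartan :: "int \<Rightarrow> int \<Rightarrow> 'a::field \<Rightarrow> 'a \<Rightarrow> 'a endo" where
  "cartan r s x y = madd (msmult x (idV r s)) (msmult y (hmat r s))"

definition lincomb :: "int \<Rightarrow> int \<Rightarrow> 'a::field \<Rightarrow> 'a \<Rightarrow> 'a \<Rightarrow> 'a \<Rightarrow> 'a endo" where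
  "lincomb r s x y b c = madd (cartan r s x y) (madd (msmult b (emat r s)) (msmult c (delta r s)))"

lemma cartan_deg: "cartan r s x y \<in> gl_deg r s 0"
  unfolding cartan_def by (intro gl_deg_madd gl_deg_msmult idV_deg hmat_deg)

lemma lincomb_gl: "lincomb r s x y b c \<in> gl r s"
  by (auto simp: gl_def lincomb_def cartan_def madd_def msmult_def idV_def hmat_def diag_def emat_def
      delta_def split: if_splits)

lemma msmult_cartan: "msmult c (cartan r s x y) = cartan r s (c * x) (c * y)"
  by (simp add: cartan_def madd_def msmult_def fun_eq_iff algebra_simps)

lemma bracket_lincomb:
  assumes "r < s"
  shows "bracket r s (lincomb r s x y b c) (lincomb r s x' y' b' c') =
     lincomb r s 0 (b*c' - c*b') (2*(y*b' - b*y')) (2*(c*y' - y*c'))"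
proof -
  note gl = gl_deg_gl[OF idV_deg] gl_deg_gl[OF hmat_deg] gl_deg_gl[OF emat_deg] gl_deg_gl[OF delta_deg]
  have reversed: "bracket r s (delta r s) (hmat r s) = msmult 2 (delta r s)"
    "bracket r s (emat r s) (hmat r s) = msmult (-2) (emat r s)"
    "bracket r s (delta r s) (emat r s) = msmult (-1) (hmat r s)"
    by (subst bracket_antisym; simp add: bracket_hmat_delta bracket_hmat_emat bracket_emat_delta[OF assms]
        msmult_def)+
  show ?thesis
    unfolding lincomb_def cartan_def bracket_madd_left bracket_madd_right bracket_smult_left
      bracket_smult_right bracket_id_left[OF gl(2)] bracket_id_left[OF gl(3)] bracket_id_left[OF gl(4)]
      bracket_id_right[OF gl(2)] bracket_id_right[OF gl(3)] bracket_id_right[OF gl(4)]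
      bracket_id_left[OF gl(1)] bracket_self reversed bracket_hmat_delta bracket_hmat_emat bracket_emat_delta[OF assms]
    by (simp add: fun_eq_iff madd_def msmult_def mzero_def algebra_simps)
qed

(* On the band z(j) = X(j+k, j), ad delta acts as the difference z(i-1) - z(i);
   the side condition r < i + k excludes the corner entry when k = 0. *)
lemma bracket_delta_entry:
  assumes X: "X \<in> gl r s" and i: "r \<le> i" "i \<le> s" and k: "r < i + k"
  shows "bracket r s X (delta r s) (i+k-1) i = X (i-1+k) (i-1) - X (i+k) i"
proof -
  have "(if r < i \<and> i \<le> s then X (i+k-1) (i-1) else 0) = X (i-1+k) (i-1)"
    using i gl_zero[OF X, of "i+k-1" "i-1"] by (auto simp: algebra_simps)
  moreover have "(if r < i+k-1+1 \<and> i+k-1+1 \<le> s then X (i+k-1+1) i else 0) = X (i+k) i"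
    using i k gl_zero[OF X, of "i+k" i] by auto
  ultimately show ?thesis by (simp only: bracket_delta)
qed

lemma int_interval_const:
  fixes z :: "int \<Rightarrow> 'a"
  assumes diff: "\<And>i. a < i \<Longrightarrow> i \<le> b \<Longrightarrow> z (i-1) = z i" and "a \<le> j" "j \<le> b"
  shows "z j = z a"
  using assms(2,3)
proof (induction j rule: int_ge_induct)
  case (step i)
  then show ?case using diff[of "i+1"] by simp
qed simp

lemma sum_int_telescope:
  fixes z :: "int \<Rightarrow> 'a::ab_group_add"
  assumes "a - 1 \<le> b"
  shows "(\<Sum>i\<in>{a..b}. z (i-1) - z i) = z (a-1) - z b"
  using assms
proof (induction b rule: int_ge_induct)
  case (step b)
  then have "{a..b+1} = insert (b+1) {a..b}" by auto
  then show ?case using step.IH by simp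
qed simp

(* ad delta is injective on gl(V)_k for k >= 1: the band is constant and vanishes at r - 1. *)
lemma ad_delta_kernel_pos:
  assumes X: "X \<in> gl_deg r s k" and k: "1 \<le> k" and B: "bracket r s X (delta r s) = mzero"
  shows "X = mzero"
proof -
  note Xgl = gl_deg_gl[OF X]
  define z where "z j = X (j+k) j" for j
  have step: "z (i-1) = z i" if "r - 1 < i" "i \<le> s" for i
    using bracket_delta_entry[OF Xgl, of i k] B that k by (simp add: z_def mzero_def)
  have const: "z j = z (r-1)" if "r - 1 \<le> j" "j \<le> s" for j
    using int_interval_const[of "r-1" s z, OF step that] .
  have "z (r-1) = 0" using gl_zero[OF Xgl] by (simp add: z_def)
  show ?thesis
  proof (rule ext, rule ext, rule ccontr)
    fix i j assume "X i j \<noteq> mzero i j"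
    then have nz: "X i j \<noteq> 0" by (simp add: mzero_def)
    then have "i = j + k" "r \<le> j" "j \<le> s" using gl_deg_nz[OF X nz] by auto
    with const[of j] nz \<open>z (r-1) = 0\<close> show False by (simp add: z_def)
  qed
qed

lemma ad_delta_kernel_zero:
  assumes X: "X \<in> gl_deg r s 0" and B: "bracket r s X (delta r s) = mzero"
  shows "X = msmult (X r r) (idV r s)"
proof -
  note Xgl = gl_deg_gl[OF X]
  have step: "X (i-1) (i-1) = X i i" if "r < i" "i \<le> s" for i
    using bracket_delta_entry[OF Xgl, of i 0] B that by (simp add: mzero_def)
  have const: "X j j = X r r" if "r \<le> j" "j \<le> s" for j
    using int_interval_const[of r s "\<lambda>i. X i i", OF step that] .
  show ?thesis
  proof (rule ext, rule ext)
    fix i j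
    show "X i j = msmult (X r r) (idV r s) i j"
    proof (cases "i = j \<and> r \<le> j \<and> j \<le> s")
      case True
      then show ?thesis using const[of j] by (simp add: msmult_def idV_def)
    next
      case False
      then have "X i j = 0" using gl_deg_nz[OF X, of i j] by auto
      then show ?thesis using False by (auto simp: msmult_def idV_def)
    qed
  qed
qed

(* For k >= 1 the band of [X, delta] sums to zero, since the band of X vanishes at both ends. *)
lemma ad_delta_band_sum:
  assumes X: "X \<in> gl_deg r s k" and k: "1 \<le> k" and "r \<le> s"
  shows "(\<Sum>i\<in>{r..s}. bracket r s X (delta r s) (i+k-1) i) = 0"
proof -
  note Xgl = gl_deg_gl[OF X]
  define z where "z j = X (j+k) j" for j
  have "(\<Sum>i\<in>{r..s}. bracket r s X (delta r s) (i+k-1) i) = (\<Sum>i\<in>{r..s}. z (i-1) - z i)"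
    using bracket_delta_entry[OF Xgl] k by (intro sum.cong) (simp_all add: z_def)
  also have "\<dots> = z (r-1) - z s"
    using \<open>r \<le> s\<close> by (intro sum_int_telescope) simp
  also have "\<dots> = 0"
    using k gl_zero[OF Xgl] by (simp add: z_def)
  finally show ?thesis .
qed

lemma line_msmult: "A \<in> line d \<Longrightarrow> msmult c A \<in> line d"
  unfolding line_def by (auto simp: msmult_def fun_eq_iff mult.assoc)

lemma line_self: "d \<in> line d"
  unfolding line_def by (auto intro: exI[of _ 1] simp: msmult_def)

lemma mzero_line: "mzero \<in> line d"
  by (metis line_msmult line_self msmult_zero)

lemma prol_step_line_Suc:
  assumes closed: "\<And>c A. A \<in> prol_step r s (line d) n \<Longrightarrow> msmult c A \<in> prol_step r s (line d) n"
  shows "X \<in> prol_step r s (line d) (Suc n) \<longleftrightarrow>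
         X \<in> gl_deg r s (int n) \<and> bracket r s X d \<in> prol_step r s (line d) n"
proof -
  have "(\<forall>d'\<in>line d. bracket r s X d' \<in> prol_step r s (line d) n)
        \<longleftrightarrow> bracket r s X d \<in> prol_step r s (line d) n"
    using line_self[of d] closed unfolding line_def by (auto simp: bracket_smult_right)
  then show ?thesis by simp
qed

(* u_0 = span(Id, H): subtracting a multiple of H moves X into the kernel of ad delta. *)
lemma prol_u0:
  "prol_step r s (line (delta r s)) (Suc 0) = ({cartan r s x y | x y. True} :: 'a::field_char_0 endo set)"
proof -
  have u0_iff: "X \<in> prol_step r s (line (delta r s)) (Suc 0) \<longleftrightarrow>
      X \<in> gl_deg r s 0 \<and> bracket r s X (delta r s) \<in> line (delta r s)" for X :: "'a endo"
    by (subst prol_step_line_Suc) (auto simp: line_msmult)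
  show ?thesis
  proof (intro set_eqI iffI)
    fix X :: "'a endo"
    assume "X \<in> prol_step r s (line (delta r s)) (Suc 0)"
    then have X: "X \<in> gl_deg r s 0" and "bracket r s X (delta r s) \<in> line (delta r s)"
      using u0_iff by auto
    then obtain c where c: "bracket r s X (delta r s) = msmult c (delta r s)"
      unfolding line_def by auto
    define Y where "Y = madd X (msmult (c/2) (hmat r s))"
    have "Y \<in> gl_deg r s 0" unfolding Y_def by (intro gl_deg_madd gl_deg_msmult X hmat_deg)
    moreover have "bracket r s Y (delta r s) = mzero"
      unfolding Y_def bracket_madd_left bracket_smult_left c bracket_hmat_delta
      by (simp add: madd_def msmult_def mzero_def fun_eq_iff)
    ultimately have Y: "Y = msmult (Y r r) (idV r s)" by (rule ad_delta_kernel_zero)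
    have "X = madd Y (msmult (- c/2) (hmat r s))"
      unfolding Y_def by (simp add: madd_def msmult_def fun_eq_iff)
    also have "\<dots> = cartan r s (Y r r) (- c/2)"
      unfolding cartan_def by (subst Y) (rule refl)
    finally show "X \<in> {cartan r s x y | x y. True}" by blast
  next
    fix X :: "'a endo"
    assume "X \<in> {cartan r s x y | x y. True}"
    then obtain x y where X: "X = cartan r s x y" by blast
    have "bracket r s X (delta r s) = msmult (-2 * y) (delta r s)"
      unfolding X cartan_def bracket_madd_left bracket_smult_left bracket_hmat_delta
        bracket_id_left[OF gl_deg_gl[OF delta_deg]]
      by (simp add: madd_def msmult_def mzero_def fun_eq_iff)
    then show "X \<in> prol_step r s (line (delta r s)) (Suc 0)"
      unfolding u0_iff X by (simp add: cartan_deg line_msmult line_self)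
  qed
qed

(* u_1 = K E: after subtracting y E only [X, delta] = x Id remains, whose band sum
   (s - r + 1) x must vanish. *)
lemma prol_u1:
  assumes rs: "r < s"
  shows "prol_step r s (line (delta r s)) (Suc (Suc 0)) = (line (emat r s) :: 'a::field_char_0 endo set)"
proof -
  have u1_iff: "X \<in> prol_step r s (line (delta r s)) (Suc (Suc 0)) \<longleftrightarrow>
      X \<in> gl_deg r s 1 \<and> bracket r s X (delta r s) \<in> {cartan r s x y | x y. True}" for X :: "'a endo"
  proof (subst prol_step_line_Suc)
    show "msmult c A \<in> prol_step r s (line (delta r s)) (Suc 0)"
      if "A \<in> prol_step r s (line (delta r s)) (Suc 0)" for c and A :: "'a endo"
      using that msmult_cartan unfolding prol_u0 by blast
  qed (simp add: prol_u0 del: prol_step.simps)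
  show ?thesis
  proof (intro set_eqI iffI)
    fix X :: "'a endo"
    assume "X \<in> prol_step r s (line (delta r s)) (Suc (Suc 0))"
    then obtain x y where X: "X \<in> gl_deg r s 1" and xy: "bracket r s X (delta r s) = cartan r s x y"
      using u1_iff by auto
    define Y where "Y = madd X (msmult (- y) (emat r s))"
    have Y: "Y \<in> gl_deg r s 1" unfolding Y_def by (intro gl_deg_madd gl_deg_msmult X emat_deg)
    have bY: "bracket r s Y (delta r s) = msmult x (idV r s)"
      unfolding Y_def bracket_madd_left bracket_smult_left xy bracket_emat_delta[OF rs] cartan_def
      by (simp add: madd_def msmult_def fun_eq_iff)
    have "(\<Sum>i\<in>{r..s}. x) = (\<Sum>i\<in>{r..s}. bracket r s Y (delta r s) (i+1-1) i)"
      by (intro sum.cong) (simp_all add: bY msmult_def idV_def)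
    also have "\<dots> = 0" using ad_delta_band_sum[OF Y] rs by simp
    finally have "of_nat (card {r..s}) * x = 0" by (simp only: sum_constant)
    moreover have "card {r..s} \<noteq> 0" using rs by simp
    ultimately have "x = 0" by simp
    then have "Y = mzero" using ad_delta_kernel_pos[OF Y] bY by (simp add: msmult_zero)
    then have "X = msmult y (emat r s)"
      unfolding Y_def by (simp add: madd_def msmult_def mzero_def fun_eq_iff add_eq_0_iff)
    then show "X \<in> line (emat r s)" unfolding line_def by blast
  next
    fix X :: "'a endo"
    assume "X \<in> line (emat r s)"
    then obtain b where X: "X = msmult b (emat r s)" unfolding line_def by blast
    have "bracket r s X (delta r s) = cartan r s 0 b"
      unfolding X bracket_smult_left bracket_emat_delta[OF rs] cartan_def
      by (simp add: madd_def msmult_def fun_eq_iff)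
    then show "X \<in> prol_step r s (line (delta r s)) (Suc (Suc 0))"
      unfolding u1_iff X using gl_deg_msmult[OF emat_deg] by blast
  qed
qed

lemma emat_band_sum_pos:
  fixes r s :: int
  assumes "r < s"
  shows "0 < (\<Sum>i\<in>{r..s}. (i - r + 1) * (s - i))"
  by (rule sum_pos2[of _ r]) (use assms in auto)

(* No nonzero degree-2 X has [X, delta] in K E: the band sum of b E is b times a positive
   integer, while band sums of brackets with delta vanish. *)
lemma deg2_bracket_emat:
  assumes rs: "r < s" and X: "X \<in> gl_deg r s 2"
    and b: "bracket r s X (delta r s) = msmult (b :: 'a::field_char_0) (emat r s)"
  shows "X = mzero"
proof -
  have "bracket r s X (delta r s) (i+2-1) i = b * of_int ((i - r + 1) * (s - i))"
    if "i \<in> {r..s}" for i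
    using that by (cases "i = s") (simp_all add: b msmult_def emat_def)
  then have "b * of_int (\<Sum>i\<in>{r..s}. (i - r + 1) * (s - i))
      = (\<Sum>i\<in>{r..s}. bracket r s X (delta r s) (i+2-1) i)"
    unfolding of_int_sum sum_distrib_left by (intro sum.cong) simp_all
  also have "\<dots> = 0" using ad_delta_band_sum[OF X] rs by simp
  finally have "b * of_int (\<Sum>i\<in>{r..s}. (i - r + 1) * (s - i)) = 0" .
  moreover have "(of_int (\<Sum>i\<in>{r..s}. (i - r + 1) * (s - i)) :: 'a) \<noteq> 0"
    using emat_band_sum_pos[OF rs] by (simp only: of_int_eq_0_iff)
  ultimately have "b = 0" by (simp only: mult_eq_0_iff) blast
  then show "X = mzero" using ad_delta_kernel_pos[OF X] b by (simp add: msmult_zero)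
qed

(* u_k = 0 for k >= 2: degree 2 by the band sum of E, higher degrees by injectivity of ad delta. *)
lemma prol_high:
  assumes rs: "r < s" and n: "2 \<le> n"
  shows "prol_step r s (line (delta r s)) (Suc n) = ({mzero} :: 'a::field_char_0 endo set)"
  using n
proof (induction n rule: dec_induct)
  case base
  have u1: "prol_step r s (line (delta r s)) 2 = (line (emat r s) :: 'a endo set)"
    using prol_u1[OF rs] by (simp only: numeral_2_eq_2)
  have u2_iff: "X \<in> prol_step r s (line (delta r s)) (Suc 2) \<longleftrightarrow>
      X \<in> gl_deg r s 2 \<and> bracket r s X (delta r s) \<in> line (emat r s)" for X :: "'a endo"
    by (subst prol_step_line_Suc) (simp_all only: u1 line_msmult of_nat_numeral)
  show ?case
  proof (intro set_eqI iffI)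
    fix X :: "'a endo"
    assume "X \<in> prol_step r s (line (delta r s)) (Suc 2)"
    then have "X \<in> gl_deg r s 2" and "bracket r s X (delta r s) \<in> line (emat r s)"
      using u2_iff by blast+
    then obtain b where "X \<in> gl_deg r s 2" "bracket r s X (delta r s) = msmult b (emat r s)"
      unfolding line_def by blast
    then show "X \<in> {mzero}" using deg2_bracket_emat[OF rs] by blast
  next
    fix X :: "'a endo"
    assume "X \<in> {mzero}"
    moreover have "bracket r s mzero (delta r s) \<in> line (emat r s)"
      unfolding bracket_mzero_left by (rule mzero_line)
    ultimately show "X \<in> prol_step r s (line (delta r s)) (Suc 2)"
      unfolding u2_iff using mzero_deg by blast
  qed
next
  case (step m)
  have closed: "msmult c A \<in> prol_step r s (line (delta r s)) (Suc m)"
    if "A \<in> prol_step r s (line (delta r s)) (Suc m)" for c and A :: "'a endo"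
    using that unfolding step.IH by (simp add: msmult_def mzero_def)
  have step_iff: "X \<in> prol_step r s (line (delta r s)) (Suc (Suc m)) \<longleftrightarrow>
      X \<in> gl_deg r s (int (Suc m)) \<and> bracket r s X (delta r s) \<in> prol_step r s (line (delta r s)) (Suc m)"
    for X :: "'a endo"
    by (rule prol_step_line_Suc) (rule closed)
  show ?case
  proof (intro set_eqI iffI)
    fix X :: "'a endo"
    assume "X \<in> prol_step r s (line (delta r s)) (Suc (Suc m))"
    then have "X \<in> gl_deg r s (int (Suc m)) \<and>
        bracket r s X (delta r s) \<in> prol_step r s (line (delta r s)) (Suc m)"
      by (simp only: step_iff)
    then show "X \<in> {mzero}"
      unfolding step.IH using ad_delta_kernel_pos[of X r s "int (Suc m)"] by simp
  next
    fix X :: "'a endo"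
    assume "X \<in> {mzero}"
    then have "X \<in> gl_deg r s (int (Suc m)) \<and> bracket r s X (delta r s) \<in> {mzero}"
      by (simp add: mzero_deg bracket_mzero_left)
    then show "X \<in> prol_step r s (line (delta r s)) (Suc (Suc m))"
      unfolding step.IH[symmetric] by (rule step_iff[THEN iffD2])
  qed
qed

lemma deg_part_ext:
  assumes "\<And>k. deg_part k A = deg_part k B"
  shows "A = B"
proof (rule ext, rule ext)
  fix i j
  have "A i j = deg_part (i - j) A i j" by (simp add: deg_part_def)
  also have "\<dots> = deg_part (i - j) B i j" by (simp add: assms)
  also have "\<dots> = B i j" by (simp add: deg_part_def)
  finally show "A i j = B i j" .
qed

lemma deg_part_lincomb: "deg_part k (lincomb r s x y b c) =
  (if k = -1 then msmult c (delta r s) else if k = 0 then cartan r s x y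
   else if k = 1 then msmult b (emat r s) else mzero)"
  by (auto simp: fun_eq_iff deg_part_def lincomb_def cartan_def madd_def msmult_def idV_def hmat_def
      diag_def emat_def delta_def mzero_def)

lemma prol_deg_line:
  assumes rs: "r < s"
  shows "prol_deg r s (line (delta r s)) k =
    (if k = -1 then line (delta r s) else if k = 0 then {cartan r s x y | x y. True}
     else if k = 1 then line (emat r s) else ({mzero} :: 'a::field_char_0 endo set))"
proof -
  consider "k < -1" | "k = -1" | "k = 0" | "k = 1" | "2 \<le> k" by linarith
  then show ?thesis
  proof cases
    case 3
    then show ?thesis using prol_u0[of r s] by (simp add: prol_deg_def del: prol_step.simps)
  next
    case 4
    then have "nat (k + 1) = Suc (Suc 0)" by simp
    then show ?thesis using prol_u1[OF rs] 4 by (simp add: prol_deg_def numeral_2_eq_2 del: prol_step.simps)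
  next
    case 5
    then have "nat (k + 1) = Suc (nat k)" and "2 \<le> nat k" by linarith+
    then show ?thesis using prol_high[OF rs] 5 by (simp add: prol_deg_def del: prol_step.simps)
  qed (simp_all add: prol_deg_def)
qed

theorem prolongation_eq:
  assumes rs: "r < s"
  shows "prolongation r s (line (delta r s)) =
    ({lincomb r s x y b c | x y b c. True} :: 'a::field_char_0 endo set)"
proof (intro set_eqI iffI)
  fix A :: "'a endo"
  assume "A \<in> prolongation r s (line (delta r s))"
  then have D: "deg_part k A \<in> prol_deg r s (line (delta r s)) k" for k
    unfolding prolongation_def by blast
  obtain c where c: "deg_part (-1) A = msmult c (delta r s)"
    using D[of "-1"] unfolding prol_deg_line[OF rs] by (auto simp: line_def)
  obtain x y where xy: "deg_part 0 A = cartan r s x y"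
    using D[of 0] unfolding prol_deg_line[OF rs] by auto
  obtain b where b: "deg_part 1 A = msmult b (emat r s)"
    using D[of 1] unfolding prol_deg_line[OF rs] by (auto simp: line_def)
  have rest: "deg_part k A = mzero" if "k \<noteq> -1" "k \<noteq> 0" "k \<noteq> 1" for k
    using D[of k] that unfolding prol_deg_line[OF rs] by simp
  have "A = lincomb r s x y b c"
    by (rule deg_part_ext) (simp add: deg_part_lincomb c xy b rest)
  then show "A \<in> {lincomb r s x y b c | x y b c. True}" by blast
next
  fix A :: "'a endo"
  assume "A \<in> {lincomb r s x y b c | x y b c. True}"
  then obtain x y b c where A: "A = lincomb r s x y b c" by blast
  have "deg_part k A \<in> prol_deg r s (line (delta r s)) k" for k
    unfolding A deg_part_lincomb prol_deg_line[OF rs]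
    by (auto intro: line_msmult line_self)
  then show "A \<in> prolongation r s (line (delta r s))"
    unfolding prolongation_def A using lincomb_gl by blast
qed

(* The element x 1 + y diag(1,-1) + b e_12 + c e_21 of gl_2 and its commutators. *)
definition mat4 :: "'a::field \<Rightarrow> 'a \<Rightarrow> 'a \<Rightarrow> 'a \<Rightarrow> 'a^2^2" where
  "mat4 x y b c = (\<chi> i j. if i = 1 then (if j = 1 then x + y else b) else (if j = 1 then c else x - y))"

lemma mat4_nth [simp]:
  "mat4 x y b c $ 1 $ 1 = x + y" "mat4 x y b c $ 1 $ 2 = b"
  "mat4 x y b c $ 2 $ 1 = c" "mat4 x y b c $ 2 $ 2 = x - y"
  by (simp_all add: mat4_def)

lemma mat4_surj:
  "(M::'a::field_char_0^2^2) = mat4 ((M$1$1 + M$2$2)/2) ((M$1$1 - M$2$2)/2) (M$1$2) (M$2$1)"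
  unfolding vec_eq_iff forall_2 by (simp add: field_simps)

lemma bracket2_mat4:
  "bracket2 (mat4 x y b c) (mat4 x' y' b' c') =
     mat4 0 (b*c' - c*b') (2*(y*b' - b*y')) (2*(c*y' - y*c'))"
  unfolding vec_eq_iff forall_2 bracket2_def
  by (simp add: matrix_matrix_mult_def sum_2 algebra_simps)

definition gl2_coords :: "int \<Rightarrow> int \<Rightarrow> 'a::field endo \<Rightarrow> 'a^2^2" where
  "gl2_coords r s A = mat4 ((A r r + A s s)/2) ((A s s - A r r)/(2 * of_int (s-r)))
     (A (r+1) r / of_int (s-r)) (A r (r+1))"

definition from_gl2 :: "int \<Rightarrow> int \<Rightarrow> 'a::field^2^2 \<Rightarrow> 'a endo" where
  "from_gl2 r s M = lincomb r s ((M$1$1 + M$2$2)/2) ((M$1$1 - M$2$2)/2) (M$1$2) (M$2$1)"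

lemma gl2_coords_lincomb:
  assumes "r < s"
  shows "gl2_coords r s (lincomb r s x y b c) = (mat4 x y b c :: 'a::field_char_0^2^2)"
proof -
  have entries: "lincomb r s x y b c r r = x - y * of_int (s - r)"
    "lincomb r s x y b c s s = x + y * of_int (s - r)"
    "lincomb r s x y b c (r+1) r = b * of_int (s - r)"
    "lincomb r s x y b c r (r+1) = c"
    using assms by (auto simp: lincomb_def cartan_def madd_def msmult_def idV_def hmat_def diag_def
        emat_def delta_def algebra_simps)
  define d where "d = (of_int (s - r) :: 'a)"
  have "d \<noteq> 0" using assms by (simp add: d_def)
  then have "(x - y * d + (x + y * d)) / 2 = x" "(x + y * d - (x - y * d)) / (2 * d) = y"
      "b * d / d = b"
    by (simp_all add: field_simps)
  then show ?thesis unfolding gl2_coords_def entries d_def[symmetric] by simp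
qed

lemma from_gl2_mat4: "from_gl2 r s (mat4 x y b c :: 'a::field_char_0^2^2) = lincomb r s x y b c"
  by (simp add: from_gl2_def)

lemma gl2_coords_madd: "gl2_coords r s (madd A B) = gl2_coords r s A + gl2_coords r s (B::'a::field_char_0 endo)"
  unfolding gl2_coords_def vec_eq_iff forall_2
  by (simp add: madd_def add_divide_distrib diff_divide_distrib algebra_simps)

lemma gl2_coords_msmult: "gl2_coords r s (msmult k A) = (\<chi> i j. k * gl2_coords r s A $ i $ j)"
  unfolding gl2_coords_def vec_eq_iff forall_2 by (simp add: msmult_def algebra_simps)

theorem prolongation_iso_gl2:
  assumes rs: "r < s"
  shows "lie_iso_gl2 r s (prolongation r s (line (delta r s)))
           (gl2_coords r s :: 'a::field_char_0 endo \<Rightarrow> 'a^2^2)"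
  unfolding lie_iso_gl2_def prolongation_eq[OF rs]
proof (intro conjI ballI allI)
  show "bij_betw (gl2_coords r s) {lincomb r s x y b c | x y b c. True} (UNIV :: ('a^2^2) set)"
  proof (rule bij_betw_byWitness[where f' = "from_gl2 r s"])
    show "\<forall>A \<in> {lincomb r s x y b c | x y b c. True}. from_gl2 r s (gl2_coords r s A) = (A :: 'a endo)"
      by (auto simp: gl2_coords_lincomb[OF rs] from_gl2_mat4)
    show "\<forall>M \<in> UNIV. gl2_coords r s (from_gl2 r s M) = (M :: 'a^2^2)"
      using gl2_coords_lincomb[OF rs] mat4_surj unfolding from_gl2_def by metis
    show "from_gl2 r s ` UNIV \<subseteq> ({lincomb r s x y b c | x y b c. True} :: 'a endo set)"
      unfolding from_gl2_def by blast
  qed simp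
next
  fix A B :: "'a endo" assume "A \<in> {lincomb r s x y b c | x y b c. True}" "B \<in> {lincomb r s x y b c | x y b c. True}"
  then show "gl2_coords r s (bracket r s A B) = bracket2 (gl2_coords r s A) (gl2_coords r s B)"
    by (auto simp: bracket_lincomb[OF rs] gl2_coords_lincomb[OF rs] bracket2_mat4)
qed (simp_all add: gl2_coords_madd gl2_coords_msmult)

lemma line_madd:
  assumes "A \<in> line d" and "B \<in> line d"
  shows "madd A B \<in> line d"
proof -
  obtain a b where "A = msmult a d" "B = msmult b d" using assms unfolding line_def by blast
  then have "madd A B = msmult (a + b) d" by (simp add: madd_def msmult_def fun_eq_iff distrib_right)
  then show ?thesis unfolding line_def by blast
qed

lemma line_subspace: "is_subspace (line d)"
  unfolding is_subspace_def using mzero_line line_madd line_msmult by blast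

lemma central_line_ideal:
  assumes "line (idV r s) \<subseteq> L" and "L \<subseteq> gl r s"
  shows "is_lie_ideal r s L (line (idV r s))"
  unfolding is_lie_ideal_def
proof (intro conjI ballI line_subspace assms(1))
  fix A X :: "'a endo" assume "A \<in> L" "X \<in> line (idV r s)"
  then obtain a where X: "X = msmult a (idV r s)" and A: "A \<in> gl r s"
    using assms(2) unfolding line_def by auto
  have "bracket r s A X = mzero"
    unfolding X bracket_smult_right bracket_id_right[OF A] by (simp add: msmult_def mzero_def)
  then show "bracket r s A X \<in> line (idV r s)" by (simp add: mzero_line)
qed

lemma idV_lincomb: "lincomb r s x 0 0 0 = msmult x (idV r s)"
  by (simp add: lincomb_def cartan_def fun_eq_iff madd_def msmult_def)

lemma delta_lincomb: "lincomb r s 0 0 0 1 = delta r s"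
  by (simp add: lincomb_def cartan_def fun_eq_iff madd_def msmult_def)

lemma lincomb_nonneg_iff:
  assumes rs: "r < s"
  shows "lincomb r s x y b c \<in> prolongation_nonneg r s (line (delta r s)) \<longleftrightarrow> (c :: 'a::field_char_0) = 0"
proof -
  have entry: "msmult c (delta r s) r (r+1) = c" using rs by (simp add: msmult_def delta_def)
  have "msmult c (delta r s) = mzero \<longleftrightarrow> c = 0"
  proof
    assume "msmult c (delta r s) = mzero"
    then show "c = 0" using entry by (simp add: mzero_def)
  qed (simp add: msmult_zero)
  moreover have "lincomb r s x y b c \<in> prolongation r s (line (delta r s))"
    unfolding prolongation_eq[OF rs] by blast
  ultimately show ?thesis
    unfolding prolongation_nonneg_def by (simp add: deg_part_lincomb)
qed

(* Maximality: in an ideal inside the nonnegative part, [delta, X] and [delta, [delta, X]]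
   must have vanishing delta-coordinates, which forces the H- and E-coordinates of X to be 0. *)
lemma nonneg_ideal_central:
  assumes rs: "r < s"
    and I: "is_lie_ideal r s (prolongation r s (line (delta r s))) (I :: 'a::field_char_0 endo set)"
    and nonneg: "I \<subseteq> prolongation_nonneg r s (line (delta r s))"
  shows "I \<subseteq> line (idV r s)"
proof
  fix X assume X: "X \<in> I"
  have in_L: "lincomb r s x y b c \<in> prolongation r s (line (delta r s))" for x y b c :: 'a
    unfolding prolongation_eq[OF rs] by blast
  have bracketI: "bracket r s (delta r s) Y \<in> I" if "Y \<in> I" for Y
    using I that in_L[of 0 0 0 1] unfolding is_lie_ideal_def delta_lincomb by blast
  have nonneg_I: "lincomb r s x y b c \<in> I \<Longrightarrow> c = 0" for x y b c
    using nonneg lincomb_nonneg_iff[OF rs] by blast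
  obtain x y b c where Xc: "X = lincomb r s x y b c"
    using X I unfolding is_lie_ideal_def prolongation_eq[OF rs] by blast
  have c: "c = 0" using nonneg_I X Xc by blast
  have X1: "bracket r s (delta r s) X = lincomb r s 0 (- b) 0 (2 * y)"
    unfolding Xc c delta_lincomb[symmetric] bracket_lincomb[OF rs] by simp
  have "lincomb r s 0 (- b) 0 (2 * y) \<in> I" using bracketI[OF X] unfolding X1 .
  then have y: "y = 0" using nonneg_I by fastforce
  have X2: "bracket r s (delta r s) (bracket r s (delta r s) X) = lincomb r s 0 0 0 (- 2 * b)"
    unfolding X1 unfolding y delta_lincomb[symmetric] bracket_lincomb[OF rs] by simp
  have "lincomb r s 0 0 0 (- 2 * b) \<in> I" using bracketI[OF bracketI[OF X]] unfolding X2 .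
  then have "b = 0" using nonneg_I by fastforce
  then have "X = msmult x (idV r s)" unfolding Xc c y idV_lincomb[symmetric] by simp
  then show "X \<in> line (idV r s)" unfolding line_def by blast
qed

theorem mainTheorem12:
  fixes r s :: int
  assumes "r < s" and "s < 0"
  shows "(\<exists>\<phi> :: 'a::field_char_0 endo \<Rightarrow> 'a^2^2.
            lie_iso_gl2 r s (prolongation r s (line (delta r s))) \<phi>)
       \<and> is_lie_ideal r s (prolongation r s (line (delta r s))) (line (idV r s :: 'a endo))
       \<and> line (idV r s :: 'a endo) \<subseteq> prolongation_nonneg r s (line (delta r s))
       \<and> (\<forall>I :: 'a endo set. is_lie_ideal r s (prolongation r s (line (delta r s))) I
              \<and> I \<subseteq> prolongation_nonneg r s (line (delta r s))
              \<longrightarrow> I \<subseteq> line (idV r s))"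
proof (intro conjI allI impI)
  note rs = assms(1)
  show "\<exists>\<phi> :: 'a endo \<Rightarrow> 'a^2^2. lie_iso_gl2 r s (prolongation r s (line (delta r s))) \<phi>"
    using prolongation_iso_gl2[OF rs] by blast
  show id_nonneg: "line (idV r s :: 'a endo) \<subseteq> prolongation_nonneg r s (line (delta r s))"
  proof
    fix X :: "'a endo" assume "X \<in> line (idV r s)"
    then obtain a where "X = lincomb r s a 0 0 0" unfolding line_def idV_lincomb[symmetric] by blast
    then show "X \<in> prolongation_nonneg r s (line (delta r s))" by (simp add: lincomb_nonneg_iff[OF rs])
  qed
  show "is_lie_ideal r s (prolongation r s (line (delta r s))) (line (idV r s :: 'a endo))"
  proof (rule central_line_ideal)
    show "line (idV r s) \<subseteq> (prolongation r s (line (delta r s)) :: 'a endo set)"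
      using id_nonneg unfolding prolongation_nonneg_def by blast
    show "prolongation r s (line (delta r s)) \<subseteq> (gl r s :: 'a endo set)"
      unfolding prolongation_def by blast
  qed
  fix I :: "'a endo set"
  assume "is_lie_ideal r s (prolongation r s (line (delta r s))) I
      \<and> I \<subseteq> prolongation_nonneg r s (line (delta r s))"
  then show "I \<subseteq> line (idV r s)" using nonneg_ideal_central[OF rs] by blast
qed

end
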